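(* Let $c \geq 1$, $r\ge 0$, $k \geq 1$ be integers and let $m$ be the number of variables of $F_{r,k}$. Then every $c$-NSOBDD computing $F_{r,k}$ has size at least $\left(\frac{m}{6k^2}\right)^{k/(4c-2)}$.
   Context: For a graph $G$, the CNF $CNF(G)$ has a variable $X_u$ for each vertex $u$ and a variable $X_{u,v}=X_{v,u}$ for each edge $\{u,v\}$; its clauses are $(X_u \vee X_{u,v} \vee X_v)$ for each edge $\{u,v\}$. $T_r$ is the complete binary tree of height $r$; $CT_{r,k}$ is obtained from $T_r$ by replacing each node by a $k$-clique and, for each edge $\{a,b\}$ of $T_r$, joining every vertex of the clique of $a$ to every vertex of the clique of $b$; $F_{r,k}=CNF(CT_{r,k})$. A non-deterministic branching program is a directed acyclic graph with one root and one leaf, some of whose edges are labelled by literals of variables. A path is consistent if it does not contain two edges labelled by opposite literals of the same variable; a consistent root-leaf path is a computational path. The program computes $F$: an assignment $S$ (as a set of literals) satisfies $F$ iff some computational path has all its labels in $S$. A $c$-NSOBDD is such a program for which there is a permutation $SV$ of its variables such that every computational path $P$ can be written as $P=P_1+\dots+P_c$ (concatenation of subpaths) where on each $P_i$ each variable occurs at most once and the labels along $P_i$ are ordered according to $SV$. Size is the number of nodes. *)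

theory Defs
  imports Complex_Main
begin

type_synonym 'x literal = "'x \<times> bool"
type_synonym 'x clause = "'x literal set"

(* variables of CNF(G): X_u = Inl u for a vertex u, X_{u,v} = Inr {u,v} for an edge *)
type_synonym 'v cnf_var = "'v + 'v set"

(* a graph is a pair (vertex set, set of edges), each edge a 2-element set *)
type_synonym 'v graph = "'v set \<times> 'v set set"

definition graph_cnf :: "'v graph \<Rightarrow> 'v cnf_var clause set" where
  "graph_cnf G = {{(Inl u, True), (Inr {u, v}, True), (Inl v, True)} | u v. {u, v} \<in> snd G}"

definition graph_cnf_vars :: "'v graph \<Rightarrow> 'v cnf_var set" where
  "graph_cnf_vars G = Inl ` fst G \<union> Inr ` snd G"

definition cnf_sat :: "'x clause set \<Rightarrow> ('x \<Rightarrow> bool) \<Rightarrow> bool" where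
  "cnf_sat F \<sigma> \<longleftrightarrow> (\<forall>C\<in>F. \<exists>l\<in>C. \<sigma> (fst l) = snd l)"

(* nodes of T_r: binary strings of length at most r (root = []) *)
definition tree_nodes :: "nat \<Rightarrow> bool list set" where
  "tree_nodes r = {w. length w \<le> r}"

definition tree_edges :: "nat \<Rightarrow> bool list set set" where
  "tree_edges r = {{w, w @ [b]} | w b. length w < r}"

definition CT :: "nat \<Rightarrow> nat \<Rightarrow> (bool list \<times> nat) graph" where
  "CT r k = (tree_nodes r \<times> {..<k},
     {{(a, i), (a, j)} | a i j. a \<in> tree_nodes r \<and> i < k \<and> j < k \<and> i \<noteq> j}
     \<union> {{(a, i), (b, j)} | a b i j. {a, b} \<in> tree_edges r \<and> i < k \<and> j < k})"

definition F :: "nat \<Rightarrow> nat \<Rightarrow> (bool list \<times> nat) cnf_var clause set" where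
  "F r k = graph_cnf (CT r k)"

(* edges are (source, optional literal label, target) *)
record ('n, 'x) bp =
  bp_nodes :: "'n set"
  bp_edges :: "('n \<times> 'x literal option \<times> 'n) set"
  bp_root :: 'n
  bp_leaf :: 'n

definition bp_wf :: "('n, 'x) bp \<Rightarrow> bool" where
  "bp_wf B \<longleftrightarrow>
     finite (bp_nodes B) \<and> finite (bp_edges B) \<and>
     (\<forall>(u, l, v) \<in> bp_edges B. u \<in> bp_nodes B \<and> v \<in> bp_nodes B) \<and>
     acyclic {(u, v). \<exists>l. (u, l, v) \<in> bp_edges B} \<and>
     bp_root B \<in> bp_nodes B \<and> bp_leaf B \<in> bp_nodes B \<and>
     (\<forall>v \<in> bp_nodes B. (\<not> (\<exists>u l. (u, l, v) \<in> bp_edges B)) \<longleftrightarrow> v = bp_root B) \<and>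
     (\<forall>u \<in> bp_nodes B. (\<not> (\<exists>l v. (u, l, v) \<in> bp_edges B)) \<longleftrightarrow> u = bp_leaf B)"

primrec is_path :: "('n, 'x) bp \<Rightarrow> 'n \<Rightarrow> ('n \<times> 'x literal option \<times> 'n) list \<Rightarrow> 'n \<Rightarrow> bool" where
  "is_path B u [] v \<longleftrightarrow> u = v"
| "is_path B u (e # P) v \<longleftrightarrow> e \<in> bp_edges B \<and> fst e = u \<and> is_path B (snd (snd e)) P v"

definition path_labels :: "('n \<times> 'x literal option \<times> 'n) list \<Rightarrow> 'x literal list" where
  "path_labels P = List.map_filter (\<lambda>e. fst (snd e)) P"

definition consistent :: "('n \<times> 'x literal option \<times> 'n) list \<Rightarrow> bool" where
  "consistent P \<longleftrightarrow> \<not> (\<exists>x. (x, True) \<in> set (path_labels P) \<and> (x, False) \<in> set (path_labels P))"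

definition comp_path :: "('n, 'x) bp \<Rightarrow> ('n \<times> 'x literal option \<times> 'n) list \<Rightarrow> bool" where
  "comp_path B P \<longleftrightarrow> is_path B (bp_root B) P (bp_leaf B) \<and> consistent P"

definition computes :: "('n, 'x) bp \<Rightarrow> 'x clause set \<Rightarrow> bool" where
  "computes B Fm \<longleftrightarrow> (\<forall>\<sigma>. cnf_sat Fm \<sigma> \<longleftrightarrow>
      (\<exists>P. comp_path B P \<and> (\<forall>l \<in> set (path_labels P). \<sigma> (fst l) = snd l)))"

definition bp_vars :: "('n, 'x) bp \<Rightarrow> 'x set" where
  "bp_vars B = {fst l | l. \<exists>u v. (u, Some l, v) \<in> bp_edges B}"

definition sv_less :: "'x list \<Rightarrow> 'x \<Rightarrow> 'x \<Rightarrow> bool" where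
  "sv_less SV a b \<longleftrightarrow> (\<exists>i j. i < j \<and> j < length SV \<and> SV ! i = a \<and> SV ! j = b)"

definition c_NSOBDD :: "nat \<Rightarrow> ('n, 'x) bp \<Rightarrow> bool" where
  "c_NSOBDD c B \<longleftrightarrow> bp_wf B \<and>
     (\<exists>SV. distinct SV \<and> set SV = bp_vars B \<and>
        (\<forall>P. comp_path B P \<longrightarrow>
           (\<exists>Ps. length Ps = c \<and> concat Ps = P \<and>
              (\<forall>Q \<in> set Ps. sorted_wrt (sv_less SV) (map fst (path_labels Q))))))"

definition bp_size :: "('n, 'x) bp \<Rightarrow> nat" where
  "bp_size B = card (bp_nodes B)"

end

(*
  Fix the variable order SV of the c-NSOBDD B and a position t in it.  Cutting each of the c
  sorted pieces of an accepting path where it passes position t splits the path into 2c segments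
  that alternately read only variables before t and only variables after t.  If accepting paths of
  two assignments pass through the same 2c - 1 cut nodes, interleaving their segments gives an
  accepting path of the assignment that follows the first one before t and the second one after t.
  So a family of satisfying assignments no two of which can be crossed in this way has at most
  |B|^(2c-1) members.

  For F r k such a family comes from a matching of edges {u, v} of CT r k with X_u before t and
  X_v after t: choosing an endpoint of every matching edge gives a vertex cover, hence a satisfying
  assignment, and crossing two different choices leaves an edge uncovered.  Call a set of vertices
  balanced at t if at least k of its vertex variables come before t and at least k after.  If the
  blow-up S x {..<k} of a subtree S of T_r is balanced, suitably permuting its cliques splits it
  into k disjoint copies of S, each crossing the cut along a tree edge: k matching edges.  Going
  down two levels at a time, each of three grandchild subtrees is balanced at some position; at the
  median of these positions the subtree minus the median grandchild's subtree is balanced, which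
  adds k edges to the matching inside that grandchild.  This gives k * ceil(r/2) edges, and
  m <= 6 k^2 2^r turns 2^(k * ceil(r/2)) <= |B|^(2c-1) into the bound.
*)

theory Submission
  imports Defs
begin

definition path_end :: "'n \<Rightarrow> ('n \<times> 'l \<times> 'n) list \<Rightarrow> 'n" where
  "path_end u P = (if P = [] then u else snd (snd (last P)))"

lemma path_end_Nil [simp]: "path_end u [] = u"
  by (simp add: path_end_def)

lemma path_end_Cons [simp]: "path_end u (e # P) = path_end (snd (snd e)) P"
  by (simp add: path_end_def)

lemma path_end_append: "path_end u (P @ Q) = path_end (path_end u P) Q"
  by (induction P arbitrary: u) auto

lemma is_path_append:
  "is_path B u (P @ Q) w \<longleftrightarrow> is_path B u P (path_end u P) \<and> is_path B (path_end u P) Q w"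
  by (induction P arbitrary: u) auto

lemma is_path_path_end: "is_path B u P v \<Longrightarrow> path_end u P = v"
  by (induction P arbitrary: u) auto

lemma is_path_edges: "is_path B u P v \<Longrightarrow> e \<in> set P \<Longrightarrow> e \<in> bp_edges B"
  by (induction P arbitrary: u) auto

lemma is_path_in_nodes:
  assumes "bp_wf B" "is_path B u P v" "u \<in> bp_nodes B"
  shows "v \<in> bp_nodes B"
  using assms(2,3)
proof (induction P arbitrary: u)
  case (Cons e P)
  then show ?case
    using assms(1) by (cases e) (auto simp: bp_wf_def)
qed simp

lemma is_path_concat:
  assumes "length segs = n" "\<And>j. j < n \<Longrightarrow> is_path B (bd j) (segs ! j) (bd (Suc j))"
  shows "is_path B (bd 0) (concat segs) (bd n)"
  using assms
proof (induction segs arbitrary: bd n)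
  case (Cons s segs)
  then obtain n' where n: "n = Suc n'"
    by (cases n) auto
  have head: "is_path B (bd 0) s (bd 1)"
    using Cons.prems n by force
  have "is_path B (bd 1) (concat segs) (bd n)"
    using Cons.IH[of n' "bd \<circ> Suc"] Cons.prems n by force
  then show ?case
    using head is_path_path_end[OF head] by (simp add: is_path_append)
qed simp

lemma is_path_concat_nth:
  assumes "is_path B u (concat segs) w" "j < length segs"
  shows "is_path B (path_end u (concat (take j segs))) (segs ! j)
           (path_end u (concat (take (Suc j) segs)))"
  using assms
proof (induction segs arbitrary: u j)
  case (Cons s segs)
  then show ?case
    by (cases j) (auto simp: is_path_append path_end_append)
qed simp

lemma path_labels_Nil [simp]: "path_labels [] = []"
  by (simp add: path_labels_def map_filter_def)

lemma path_labels_Cons: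
  "path_labels (e # P) = (case fst (snd e) of None \<Rightarrow> path_labels P | Some l \<Rightarrow> l # path_labels P)"
  by (simp add: path_labels_def map_filter_def split: option.split)

lemma path_labels_append: "path_labels (P @ Q) = path_labels P @ path_labels Q"
  by (simp add: path_labels_def map_filter_def)

lemma set_path_labels: "set (path_labels P) = {l. \<exists>e\<in>set P. fst (snd e) = Some l}"
  by (induction P) (auto simp: path_labels_Cons split: option.splits)

lemma set_path_labels_concat:
  "set (path_labels (concat segs)) = (\<Union>s\<in>set segs. set (path_labels s))"
  by (auto simp: set_path_labels)

lemma path_label_in_bp_vars:
  assumes "is_path B u P v" "l \<in> set (path_labels P)"
  shows "fst l \<in> bp_vars B"
proof -
  obtain a b where "(a, Some l, b) \<in> set P"
    using assms(2) by (force simp: set_path_labels)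
  then show ?thesis
    using is_path_edges[OF assms(1)] unfolding bp_vars_def by blast
qed

lemma consistent_if_agrees: "\<forall>l\<in>set (path_labels P). \<sigma> (fst l) = snd l \<Longrightarrow> consistent P"
  unfolding consistent_def by (metis fst_conv snd_conv)

section \<open>Cutting sorted runs and crossing them\<close>

definition c_sorted :: "nat \<Rightarrow> 'x list \<Rightarrow> ('n, 'x) bp \<Rightarrow> bool" where
  "c_sorted c SV B \<longleftrightarrow> distinct SV \<and>
     (\<forall>P. comp_path B P \<longrightarrow>
        (\<exists>Ps. length Ps = c \<and> concat Ps = P \<and>
           (\<forall>Q \<in> set Ps. sorted_wrt (sv_less SV) (map fst (path_labels Q)))))"

lemma c_NSOBDD_iff: "c_NSOBDD c B \<longleftrightarrow> bp_wf B \<and> (\<exists>SV. set SV = bp_vars B \<and> c_sorted c SV B)"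
  by (auto simp: c_NSOBDD_def c_sorted_def)

lemma sv_less_take_closed:
  assumes "distinct SV" "sv_less SV a b" "b \<in> set (take t SV)"
  shows "a \<in> set (take t SV)"
proof -
  obtain i j where ij: "i < j" "j < length SV" "SV ! i = a" "SV ! j = b"
    using assms(2) by (auto simp: sv_less_def)
  obtain j' where "j' < t" "j' < length SV" "SV ! j' = b"
    using assms(3) by (auto simp: in_set_conv_nth)
  then have "j < t"
    using ij assms(1) nth_eq_iff_index_eq by metis
  then show ?thesis
    using ij by (auto simp: in_set_conv_nth intro!: exI[of _ i])
qed

definition label_in :: "'x set \<Rightarrow> ('n \<times> 'x literal option \<times> 'n) \<Rightarrow> bool" where
  "label_in Ls e = (case fst (snd e) of None \<Rightarrow> True | Some l \<Rightarrow> fst l \<in> Ls)"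

lemma path_labels_takeWhile_label_in:
  "l \<in> set (path_labels (takeWhile (label_in Ls) Q)) \<Longrightarrow> fst l \<in> Ls"
  by (auto simp: set_path_labels label_in_def dest!: set_takeWhileD)

lemma path_labels_dropWhile_label_in:
  assumes "distinct SV" "sorted_wrt (sv_less SV) (map fst (path_labels Q))"
    and "l \<in> set (path_labels (dropWhile (label_in (set (take t SV))) Q))"
  shows "fst l \<notin> set (take t SV)"
proof -
  let ?Ls = "set (take t SV)"
  obtain e rest where split: "dropWhile (label_in ?Ls) Q = e # rest"
    using assms(3) by (cases "dropWhile (label_in ?Ls) Q") auto
  then have "\<not> label_in ?Ls e"
    by (metis dropWhile_eq_Cons_conv)
  then obtain l0 where l0: "fst (snd e) = Some l0" "fst l0 \<notin> ?Ls"
    by (auto simp: label_in_def split: option.splits)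
  have "Q = takeWhile (label_in ?Ls) Q @ e # rest"
    using split by (metis takeWhile_dropWhile_id)
  then have "path_labels Q = path_labels (takeWhile (label_in ?Ls) Q) @ l0 # path_labels rest"
    by (metis l0(1) option.simps(5) path_labels_Cons path_labels_append)
  then have later: "sv_less SV (fst l0) (fst l')" if "l' \<in> set (path_labels rest)" for l'
    using assms(2) that by (simp add: sorted_wrt_append)
  have "l = l0 \<or> l \<in> set (path_labels rest)"
    using assms(3) split l0 by (simp add: path_labels_Cons)
  then show ?thesis
    using l0(2) later sv_less_take_closed[OF assms(1)] by blast
qed

definition alternating :: "'x set \<Rightarrow> ('n \<times> 'x literal option \<times> 'n) list list \<Rightarrow> bool" where
  "alternating Ls segs \<longleftrightarrow>
     (\<forall>j < length segs. \<forall>l \<in> set (path_labels (segs ! j)). fst l \<in> Ls \<longleftrightarrow> even j)"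

lemma sorted_pieces_alternating:
  assumes "distinct SV" "\<forall>Q \<in> set Ps. sorted_wrt (sv_less SV) (map fst (path_labels Q))"
  shows "\<exists>segs. length segs = 2 * length Ps \<and> concat segs = concat Ps \<and>
           alternating (set (take t SV)) segs"
  using assms(2)
proof (induction Ps)
  case Nil
  then show ?case by (simp add: alternating_def)
next
  case (Cons Q Ps)
  let ?Ls = "set (take t SV)"
  obtain segs where segs: "length segs = 2 * length Ps" "concat segs = concat Ps"
      "alternating ?Ls segs"
    using Cons by auto
  let ?segs' = "takeWhile (label_in ?Ls) Q # dropWhile (label_in ?Ls) Q # segs"
  have "alternating ?Ls ?segs'"
    unfolding alternating_def
  proof (intro allI impI ballI)
    fix j l assume "j < length ?segs'" and l: "l \<in> set (path_labels (?segs' ! j))"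
    consider "j = 0" | "j = 1" | j' where "j = Suc (Suc j')" "j' < length segs"
      using \<open>j < length ?segs'\<close> by (cases j; cases "j - 1") auto
    then show "fst l \<in> ?Ls \<longleftrightarrow> even j"
    proof cases
      case 1
      then show ?thesis
        using l path_labels_takeWhile_label_in by fastforce
    next
      case 2
      then show ?thesis
        using l path_labels_dropWhile_label_in[OF assms(1)] Cons.prems by fastforce
    next
      case 3
      then show ?thesis
        using l segs(3) by (simp add: alternating_def)
    qed
  qed
  then show ?case
    using segs by (intro exI[of _ ?segs']) simp
qed

definition boundary_nodes :: "'n \<Rightarrow> ('n \<times> 'l \<times> 'n) list list \<Rightarrow> 'n list" where
  "boundary_nodes u segs = map (\<lambda>j. path_end u (concat (take j segs))) [1..<length segs]"

definition interleave :: "'a list list \<Rightarrow> 'a list list \<Rightarrow> 'a list list" where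
  "interleave segs segs' = map (\<lambda>j. if even j then segs ! j else segs' ! j) [0..<length segs]"

lemma is_path_interleave:
  assumes "is_path B u (concat segs) w" "is_path B u (concat segs') w"
    and "length segs' = length segs" "boundary_nodes u segs = boundary_nodes u segs'"
  shows "is_path B u (concat (interleave segs segs')) w"
proof -
  let ?n = "length segs"
  define bd where "bd j = path_end u (concat (take j segs))" for j
  have bd': "path_end u (concat (take j segs')) = bd j" if j: "j \<le> ?n" for j
  proof -
    consider "j = 0" | "j = ?n" | "0 < j" "j < ?n"
      using j by (meson le_neq_implies_less not_gr0)
    then show ?thesis
    proof cases
      case 3
      then have "boundary_nodes u segs ! (j - 1) = bd j" "boundary_nodes u segs' ! (j - 1) = path_end u (concat (take j segs'))"
        using assms(3) by (auto simp: boundary_nodes_def bd_def)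
      then show ?thesis
        using assms(4) by simp
    qed (use is_path_path_end[OF assms(1)] is_path_path_end[OF assms(2)] assms(3) in \<open>auto simp: bd_def\<close>)
  qed
  have "is_path B (bd 0) (concat (interleave segs segs')) (bd ?n)"
  proof (rule is_path_concat)
    fix j assume "j < ?n"
    then show "is_path B (bd j) (interleave segs segs' ! j) (bd (Suc j))"
      using is_path_concat_nth[OF assms(1), of j] is_path_concat_nth[OF assms(2), of j]
        bd'[of j] bd'[of "Suc j"] assms(3)
      by (auto simp: interleave_def bd_def)
  qed (simp add: interleave_def)
  then show ?thesis
    using is_path_path_end[OF assms(1)] by (simp add: bd_def)
qed

lemma set_path_labels_interleave:
  assumes "length segs' = length segs" "l \<in> set (path_labels (concat (interleave segs segs')))"
  shows "\<exists>j < length segs. if even j then l \<in> set (path_labels (segs ! j))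
                                    else l \<in> set (path_labels (segs' ! j))"
  using assms by (fastforce simp: set_path_labels_concat interleave_def)

definition fooling_family :: "'x clause set \<Rightarrow> 'x set \<Rightarrow> ('i \<Rightarrow> 'x \<Rightarrow> bool) \<Rightarrow> 'i set \<Rightarrow> bool" where
  "fooling_family Fm Ls \<sigma> I \<longleftrightarrow> (\<forall>s\<in>I. cnf_sat Fm (\<sigma> s)) \<and>
     (\<forall>s\<in>I. \<forall>s'\<in>I. s \<noteq> s' \<longrightarrow>
        \<not> cnf_sat Fm (override_on (\<sigma> s') (\<sigma> s) Ls) \<or> \<not> cnf_sat Fm (override_on (\<sigma> s) (\<sigma> s') Ls))"

lemma computes_alternating_path:
  assumes "c_sorted c SV B" "computes B Fm" "cnf_sat Fm \<sigma>"
  obtains segs where "length segs = 2 * c" "comp_path B (concat segs)"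
    "\<forall>l \<in> set (path_labels (concat segs)). \<sigma> (fst l) = snd l"
    "alternating (set (take t SV)) segs"
proof -
  obtain P where P: "comp_path B P" "\<forall>l \<in> set (path_labels P). \<sigma> (fst l) = snd l"
    using assms(2,3) by (auto simp: computes_def)
  then obtain Ps where "length Ps = c" "concat Ps = P"
      "\<forall>Q \<in> set Ps. sorted_wrt (sv_less SV) (map fst (path_labels Q))"
    using assms(1) unfolding c_sorted_def by blast
  then show ?thesis
    using that P sorted_pieces_alternating[of SV Ps t] assms(1) by (auto simp: c_sorted_def)
qed

lemma crossed_runs_cnf_sat:
  assumes comp: "computes B Fm" and len: "length segs' = length segs"
    and paths: "comp_path B (concat segs)" "comp_path B (concat segs')"
    and agree: "\<forall>l \<in> set (path_labels (concat segs)). \<sigma> (fst l) = snd l"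
      "\<forall>l \<in> set (path_labels (concat segs')). \<sigma>' (fst l) = snd l"
    and alt: "alternating Ls segs" "alternating Ls segs'"
    and cut: "boundary_nodes (bp_root B) segs = boundary_nodes (bp_root B) segs'"
  shows "cnf_sat Fm (override_on \<sigma>' \<sigma> Ls)"
proof -
  let ?P = "concat (interleave segs segs')"
  have "is_path B (bp_root B) ?P (bp_leaf B)"
    by (rule is_path_interleave) (use paths len cut in \<open>auto simp: comp_path_def\<close>)
  moreover have agree_P: "\<forall>l \<in> set (path_labels ?P). override_on \<sigma>' \<sigma> Ls (fst l) = snd l"
  proof
    fix l assume "l \<in> set (path_labels ?P)"
    then obtain j where j: "j < length segs" "if even j then l \<in> set (path_labels (segs ! j))
                                         else l \<in> set (path_labels (segs' ! j))"
      using set_path_labels_interleave len by metis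
    show "override_on \<sigma>' \<sigma> Ls (fst l) = snd l"
      using j agree alt len
      by (cases "even j") (auto simp: override_on_def alternating_def set_path_labels_concat)
  qed
  ultimately show ?thesis
    using comp consistent_if_agrees[OF agree_P] unfolding computes_def comp_path_def by blast
qed

lemma boundary_nodes_subset:
  assumes "bp_wf B" "is_path B (bp_root B) (concat segs) w"
  shows "set (boundary_nodes (bp_root B) segs) \<subseteq> bp_nodes B"
proof -
  have "path_end (bp_root B) (concat (take j segs)) \<in> bp_nodes B" for j
  proof -
    have "is_path B (bp_root B) (concat (take j segs @ drop j segs)) w"
      using assms(2) by simp
    then have "is_path B (bp_root B) (concat (take j segs)) (path_end (bp_root B) (concat (take j segs)))"
      by (simp only: concat_append is_path_append)
    from is_path_in_nodes[OF assms(1) this] show ?thesis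
      using assms(1) by (simp add: bp_wf_def)
  qed
  then show ?thesis
    by (auto simp: boundary_nodes_def)
qed

lemma fooling_family_card_le:
  assumes wf: "bp_wf B" and sorted: "c_sorted c SV B" and comp: "computes B Fm"
    and fool: "fooling_family Fm (set (take t SV)) \<sigma> I"
  shows "card I \<le> card (bp_nodes B) ^ (2 * c - 1)"
proof -
  let ?Ls = "set (take t SV)"
  have "\<exists>segs. length segs = 2 * c \<and> comp_path B (concat segs) \<and>
      (\<forall>l \<in> set (path_labels (concat segs)). \<sigma> s (fst l) = snd l) \<and> alternating ?Ls segs"
    if "s \<in> I" for s
    using computes_alternating_path[OF sorted comp, of "\<sigma> s"] fool that
    by (metis fooling_family_def)
  then obtain segs where segs: "\<And>s. s \<in> I \<Longrightarrow> length (segs s) = 2 * c \<and> comp_path B (concat (segs s)) \<and>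
      (\<forall>l \<in> set (path_labels (concat (segs s))). \<sigma> s (fst l) = snd l) \<and> alternating ?Ls (segs s)"
    by metis
  define \<tau> where "\<tau> s = boundary_nodes (bp_root B) (segs s)" for s
  have "inj_on \<tau> I"
  proof (rule inj_onI)
    fix s s' assume s: "s \<in> I" "s' \<in> I" "\<tau> s = \<tau> s'"
    have "cnf_sat Fm (override_on (\<sigma> s') (\<sigma> s) ?Ls)"
      by (rule crossed_runs_cnf_sat[OF comp, of "segs s'" "segs s"])
        (use segs[OF s(1)] segs[OF s(2)] s(3) in \<open>simp_all add: \<tau>_def\<close>)
    moreover have "cnf_sat Fm (override_on (\<sigma> s) (\<sigma> s') ?Ls)"
      by (rule crossed_runs_cnf_sat[OF comp, of "segs s" "segs s'"])
        (use segs[OF s(1)] segs[OF s(2)] s(3) in \<open>simp_all add: \<tau>_def\<close>)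
    ultimately show "s = s'"
      using fool s(1,2) unfolding fooling_family_def by blast
  qed
  moreover have "\<tau> ` I \<subseteq> {xs. set xs \<subseteq> bp_nodes B \<and> length xs = 2 * c - 1}"
    using segs boundary_nodes_subset[OF wf] by (fastforce simp: \<tau>_def boundary_nodes_def comp_path_def)
  moreover have "finite (bp_nodes B)"
    using wf by (simp add: bp_wf_def)
  ultimately have "card I \<le> card {xs. set xs \<subseteq> bp_nodes B \<and> length xs = 2 * c - 1}"
    by (intro card_inj_on_le finite_lists_length_eq)
  then show ?thesis
    using \<open>finite (bp_nodes B)\<close> by (simp add: card_lists_length_eq)
qed

section \<open>Vertex covers and matchings of a graph\<close>

lemma graph_cnf_clause: "{u, v} \<in> snd G \<Longrightarrow> {(Inl u, True), (Inr {u, v}, True), (Inl v, True)} \<in> graph_cnf G"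
  unfolding graph_cnf_def by blast

lemma cnf_sat_graph_cnf_iff:
  "cnf_sat (graph_cnf G) \<sigma> \<longleftrightarrow>
     (\<forall>u v. {u, v} \<in> snd G \<longrightarrow> \<sigma> (Inl u) \<or> \<sigma> (Inr {u, v}) \<or> \<sigma> (Inl v))"
proof (intro iffI allI impI)
  fix u v assume "cnf_sat (graph_cnf G) \<sigma>" "{u, v} \<in> snd G"
  then obtain l where "l \<in> {(Inl u, True), (Inr {u, v}, True), (Inl v, True)}" "\<sigma> (fst l) = snd l"
    using graph_cnf_clause unfolding cnf_sat_def by meson
  then show "\<sigma> (Inl u) \<or> \<sigma> (Inr {u, v}) \<or> \<sigma> (Inl v)"
    by auto
next
  assume clauses: "\<forall>u v. {u, v} \<in> snd G \<longrightarrow> \<sigma> (Inl u) \<or> \<sigma> (Inr {u, v}) \<or> \<sigma> (Inl v)"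
  show "cnf_sat (graph_cnf G) \<sigma>"
    unfolding cnf_sat_def
  proof
    fix C assume "C \<in> graph_cnf G"
    then obtain u v where C: "C = {(Inl u, True), (Inr {u, v}, True), (Inl v, True)}" "{u, v} \<in> snd G"
      unfolding graph_cnf_def by blast
    then have "\<sigma> (Inl u) \<or> \<sigma> (Inr {u, v}) \<or> \<sigma> (Inl v)"
      using clauses by blast
    then show "\<exists>l\<in>C. \<sigma> (fst l) = snd l"
      using C(1) by auto
  qed
qed

definition cover_assignment :: "'v set \<Rightarrow> 'v cnf_var \<Rightarrow> bool" where
  "cover_assignment Z x = (case x of Inl v \<Rightarrow> v \<notin> Z | Inr e \<Rightarrow> e \<subseteq> Z)"

lemma cnf_sat_cover_assignment: "cnf_sat (graph_cnf G) (cover_assignment Z)"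
  by (auto simp: cnf_sat_graph_cnf_iff cover_assignment_def)

definition matching :: "'v graph \<Rightarrow> 'v set \<Rightarrow> ('v \<times> 'v) set \<Rightarrow> bool" where
  "matching G L M \<longleftrightarrow> finite M \<and> inj_on fst M \<and> inj_on snd M \<and>
     (\<forall>e\<in>M. fst e \<in> L \<and> snd e \<notin> L \<and> {fst e, snd e} \<in> snd G)"

lemma matching_Un:
  assumes "matching G L M1" "matching G L M2" "M1 \<subseteq> X \<times> X" "M2 \<subseteq> Y \<times> Y" "X \<inter> Y = {}"
  shows "matching G L (M1 \<union> M2)" "card (M1 \<union> M2) = card M1 + card M2"
proof -
  have "fst ` (M1 - M2) \<subseteq> X" "snd ` (M1 - M2) \<subseteq> X" "fst ` (M2 - M1) \<subseteq> Y" "snd ` (M2 - M1) \<subseteq> Y"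
    using assms(3,4) by auto
  then have "fst ` (M1 - M2) \<inter> fst ` (M2 - M1) = {}" "snd ` (M1 - M2) \<inter> snd ` (M2 - M1) = {}"
    using assms(5) by blast+
  moreover have "M1 \<inter> M2 = {}"
    using assms(3-5) by auto
  ultimately
  show "matching G L (M1 \<union> M2)" "card (M1 \<union> M2) = card M1 + card M2"
    using assms(1,2) by (simp_all add: matching_def inj_on_Un ball_Un card_Un_disjoint)
qed

definition matching_assignment :: "('v \<times> 'v) set \<Rightarrow> ('v \<times> 'v) set \<Rightarrow> 'v cnf_var \<Rightarrow> bool" where
  "matching_assignment M S = cover_assignment (fst ` S \<union> snd ` (M - S))"

(* For e = (x, y) in S - S', the crossed assignment takes X_x from the cover chosen by S,
   which contains x, and X_y from the cover chosen by S', which contains y; neither cover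
   contains both, so the clause of e fails. *)
lemma matching_assignment_hybrid_unsat:
  assumes M: "matching G {v. Inl v \<in> Ls} M" and S: "S \<subseteq> M" "S' \<subseteq> M" and e: "e \<in> S" "e \<notin> S'"
  shows "\<not> cnf_sat (graph_cnf G)
           (override_on (matching_assignment M S') (matching_assignment M S) Ls)"
proof -
  let ?\<sigma> = "override_on (matching_assignment M S') (matching_assignment M S) Ls"
  obtain x y where xy: "e = (x, y)"
    by (cases e)
  have eM: "e \<in> M"
    using S e by blast
  have L: "fst ` M \<subseteq> {v. Inl v \<in> Ls}" "snd ` M \<inter> {v. Inl v \<in> Ls} = {}"
    and inj: "inj_on fst M" "inj_on snd M"
    using M by (auto simp: matching_def)
  have xL: "Inl x \<in> Ls" and yL: "Inl y \<notin> Ls" and edge: "{x, y} \<in> snd G"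
    using M eM xy by (auto simp: matching_def)
  have "y \<notin> snd ` (M - S)"
    using inj_on_image_mem_iff[OF inj(2) eM, of "M - S"] e(1) xy by auto
  moreover have "y \<notin> fst ` S"
    using L(1) S(1) yL by blast
  ultimately have y_S: "y \<notin> fst ` S \<union> snd ` (M - S)"
    by blast
  have "x \<notin> fst ` S'"
    using inj_on_image_mem_iff[OF inj(1) eM S(2)] e(2) xy by auto
  moreover have "x \<notin> snd ` (M - S')"
    using L(2) xL by blast
  ultimately have x_S': "x \<notin> fst ` S' \<union> snd ` (M - S')"
    by blast
  have "x \<in> fst ` S" "y \<in> snd ` (M - S')"
    using e eM xy by (metis Diff_iff fst_conv image_eqI snd_conv)+
  then have "\<not> ?\<sigma> (Inl x)" "\<not> ?\<sigma> (Inr {x, y})" "\<not> ?\<sigma> (Inl y)"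
    using xL yL x_S' y_S
    by (simp_all add: override_on_def matching_assignment_def cover_assignment_def)
  then show ?thesis
    using edge unfolding cnf_sat_graph_cnf_iff by blast
qed

lemma matching_fooling_family:
  assumes "matching G {v. Inl v \<in> Ls} M"
  shows "fooling_family (graph_cnf G) Ls (matching_assignment M) (Pow M)"
  unfolding fooling_family_def
  using matching_assignment_hybrid_unsat[OF assms]
  by (auto simp: matching_assignment_def cnf_sat_cover_assignment)

lemma computes_cnf_sat_cong:
  assumes "computes B Fm" "cnf_sat Fm \<sigma>" "\<And>x. x \<in> bp_vars B \<Longrightarrow> \<sigma>' x = \<sigma> x"
  shows "cnf_sat Fm \<sigma>'"
proof -
  obtain P where P: "comp_path B P" "\<forall>l \<in> set (path_labels P). \<sigma> (fst l) = snd l"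
    using assms(1,2) by (auto simp: computes_def)
  then have "\<forall>l \<in> set (path_labels P). \<sigma>' (fst l) = snd l"
    using assms(3) path_label_in_bp_vars by (fastforce simp: comp_path_def)
  then show ?thesis
    using assms(1) P(1) by (auto simp: computes_def)
qed

lemma computes_graph_cnf_vertex_var:
  fixes G :: "'v graph"
  assumes "computes B (graph_cnf G)" "{u, v} \<in> snd G" "u \<noteq> v"
  shows "Inl u \<in> bp_vars B"
proof (rule ccontr)
  assume u: "Inl u \<notin> bp_vars B"
  define \<sigma> where "\<sigma> x = (case x of Inl w \<Rightarrow> w = u | Inr e \<Rightarrow> u \<notin> e)" for x :: "'v cnf_var"
  have "cnf_sat (graph_cnf G) \<sigma>"
    by (auto simp: cnf_sat_graph_cnf_iff \<sigma>_def)
  then have "cnf_sat (graph_cnf G) (\<sigma>(Inl u := False))"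
    using computes_cnf_sat_cong[OF assms(1)] u by fastforce
  then have "(\<sigma>(Inl u := False)) (Inl u) \<or> (\<sigma>(Inl u := False)) (Inr {u, v}) \<or> (\<sigma>(Inl u := False)) (Inl v)"
    using assms(2) unfolding cnf_sat_graph_cnf_iff by blast
  then show False
    using assms(3) by (simp add: \<sigma>_def)
qed

section \<open>Cyclic arrangements of marks\<close>

lemma exists_bij_betw_image_eq:
  assumes "finite U" "A \<subseteq> U" "B \<subseteq> U" "card A = card B"
  shows "\<exists>\<pi>. bij_betw \<pi> U U \<and> \<pi> ` A = B"
proof -
  have fin: "finite A" "finite B"
    using assms(1-3) finite_subset by auto
  then obtain f where f: "bij_betw f A B"
    using finite_same_card_bij assms(4) by blast
  have "card (U - A) = card (U - B)"
    using assms fin by (simp add: card_Diff_subset)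
  then obtain g where g: "bij_betw g (U - A) (U - B)"
    using finite_same_card_bij[of "U - A" "U - B"] assms(1) by blast
  define \<pi> where "\<pi> x = (if x \<in> A then f x else g x)" for x
  have "bij_betw \<pi> A B"
    using f by (rule bij_betw_cong[THEN iffD1, rotated]) (simp add: \<pi>_def)
  moreover have "bij_betw \<pi> (U - A) (U - B)"
    using g by (rule bij_betw_cong[THEN iffD1, rotated]) (simp add: \<pi>_def)
  ultimately have "bij_betw \<pi> (A \<union> (U - A)) (B \<union> (U - B))"
    by (rule bij_betw_combine) blast
  moreover have "A \<union> (U - A) = U" "B \<union> (U - B) = U"
    using assms(2,3) by auto
  ultimately show ?thesis
    using \<open>bij_betw \<pi> A B\<close> by (auto simp: bij_betw_def)
qed

lemma mod_add_inj:
  fixes s u u' k :: nat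
  assumes "u < k" "u' < k" "(s + u) mod k = (s + u') mod k"
  shows "u = u'"
proof -
  have le: "u = u'" if "u \<le> u'" "u' < k" "(s + u) mod k = (s + u') mod k" for u u'
  proof -
    have "k dvd u' - u"
      using mod_eq_dvd_iff_nat[of "s + u" "s + u'" k] that by simp
    then show ?thesis
      using that nat_dvd_not_less[of "u' - u" k] by linarith
  qed
  show ?thesis
    using le[of u u'] le[of u' u] assms by linarith
qed

lemma prefix_sum_locate:
  fixes f :: "nat \<Rightarrow> nat"
  assumes "x < (\<Sum>j<n. f j)"
  shows "\<exists>j<n. (\<Sum>j'<j. f j') \<le> x \<and> x < (\<Sum>j'<Suc j. f j')"
  using assms
proof (induction n)
  case (Suc n)
  then show ?case
    by (cases "x < (\<Sum>j<n. f j)") (auto intro: less_SucI)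
qed simp

(* Column j of a table with k rows gets ell j marks, in the rows following cyclically the last
   mark of column j - 1.  The marks are thus numbered consecutively, and a mark numbered x lies
   in row x mod k. *)
definition cyclic_block :: "nat \<Rightarrow> (nat \<Rightarrow> nat) \<Rightarrow> nat \<Rightarrow> nat set" where
  "cyclic_block k ell j = (\<lambda>u. ((\<Sum>j'<j. ell j') + u) mod k) ` {..<ell j}"

lemma card_cyclic_block:
  assumes "ell j \<le> k"
  shows "card (cyclic_block k ell j) = ell j"
proof -
  have "inj_on (\<lambda>u. ((\<Sum>j'<j. ell j') + u) mod k) {..<ell j}"
    using assms by (intro inj_onI) (metis lessThan_iff mod_add_inj order_less_le_trans)
  then show ?thesis
    by (simp add: cyclic_block_def card_image)
qed

lemma cyclic_block_subset: "0 < k \<Longrightarrow> cyclic_block k ell j \<subseteq> {..<k}"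
  by (auto simp: cyclic_block_def)

lemma cyclic_blocks_cover:
  assumes "i < k" "k \<le> (\<Sum>j<n. ell j)"
  shows "\<exists>j<n. i \<in> cyclic_block k ell j"
proof -
  obtain j where j: "j < n" "(\<Sum>j'<j. ell j') \<le> i" "i < (\<Sum>j'<Suc j. ell j')"
    using prefix_sum_locate[where x = i and n = n and f = ell] assms by auto
  then have "i - (\<Sum>j'<j. ell j') < ell j" "((\<Sum>j'<j. ell j') + (i - (\<Sum>j'<j. ell j'))) mod k = i"
    using assms(1) by auto
  then show ?thesis
    using j(1) unfolding cyclic_block_def by (metis image_eqI lessThan_iff)
qed

(* A row marked in all n columns would need n marks x below the sum with x mod k = i, but a sum
   of at most (n - 1) k leaves room for only n - 1 of them. *)
lemma cyclic_blocks_avoid: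
  assumes "i < k" "\<forall>j<n. ell j \<le> k" "(\<Sum>j<n. ell j) + k \<le> n * k"
  shows "\<exists>j<n. i \<notin> cyclic_block k ell j"
proof (rule ccontr)
  define s where "s j = (\<Sum>j'<j. ell j')" for j
  assume "\<not> (\<exists>j<n. i \<notin> cyclic_block k ell j)"
  then have "\<forall>j<n. \<exists>u<ell j. (s j + u) mod k = i"
    by (auto simp: cyclic_block_def s_def)
  then obtain u where u: "\<And>j. j < n \<Longrightarrow> u j < ell j \<and> (s j + u j) mod k = i"
    by metis
  define X where "X j = s j + u j" for j
  have X_less: "X j < s (Suc j)" if "j < n" for j
    using u[OF that] by (simp add: X_def s_def)
  have "X j < X j'" if "j < j'" "j' < n" for j j'
  proof -
    have "s (Suc j) \<le> s j'"
      unfolding s_def using that by (intro sum_mono2) auto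
    then show ?thesis
      using X_less[of j] that by (simp add: X_def)
  qed
  then have "inj_on X {..<n}"
    by (metis inj_onI lessThan_iff linorder_neqE_nat order_less_irrefl)
  then have "inj_on (\<lambda>j. X j div k) {..<n}"
    using u unfolding inj_on_def X_def by (metis div_mult_mod_eq lessThan_iff)
  moreover have "X j div k < n - 1" if "j < n" for j
  proof -
    have "s (Suc j) \<le> s n"
      unfolding s_def using that by (intro sum_mono2) auto
    then have "X j < (n - 1) * k"
      using X_less[OF that] assms(3) by (simp add: s_def diff_mult_distrib)
    then show ?thesis
      by (simp add: less_mult_imp_div_less)
  qed
  ultimately have "card {..<n} \<le> card {..<n - 1}"
    by (intro card_inj_on_le) auto
  moreover have "0 < n"
    using assms(1,3) by (cases n) auto
  ultimately show False
    by simp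
qed

lemma exists_row_permutations:
  fixes A :: "'a \<Rightarrow> nat set"
  assumes "finite S" "0 < k" "\<And>a. a \<in> S \<Longrightarrow> A a \<subseteq> {..<k}"
    and "k \<le> (\<Sum>a\<in>S. card (A a))" "(\<Sum>a\<in>S. card (A a)) + k \<le> card S * k"
  shows "\<exists>\<pi>. (\<forall>a\<in>S. bij_betw (\<pi> a) {..<k} {..<k}) \<and>
             (\<forall>i<k. (\<exists>a\<in>S. \<pi> a i \<in> A a) \<and> (\<exists>a\<in>S. \<pi> a i \<notin> A a))"
proof -
  let ?n = "card S"
  obtain en where en: "bij_betw en {..<?n} S"
    using ex_bij_betw_nat_finite[OF assms(1)] by (auto simp: atLeast0LessThan)
  define ell where "ell j = card (A (en j))" for j
  have ell_le: "ell j \<le> k" if "j < ?n" for j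
    using assms(3) en that card_mono[of "{..<k}"] by (auto simp: ell_def bij_betw_apply)
  have sum_eq: "(\<Sum>a\<in>S. card (A a)) = (\<Sum>j<?n. ell j)"
    unfolding ell_def by (rule sum.reindex_bij_betw[OF en, symmetric])
  have "\<exists>p. bij_betw p {..<k} {..<k} \<and> p ` cyclic_block k ell j = A (en j)" if "j < ?n" for j
    using exists_bij_betw_image_eq[OF finite_lessThan cyclic_block_subset[OF assms(2)]]
      assms(3) en that card_cyclic_block[of ell j k, OF ell_le[OF that]]
    by (auto simp: ell_def bij_betw_apply)
  then obtain P where P: "\<And>j. j < ?n \<Longrightarrow> bij_betw (P j) {..<k} {..<k} \<and> P j ` cyclic_block k ell j = A (en j)"
    by metis
  define \<pi> where "\<pi> a = P (inv_into {..<?n} en a)" for a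
  have \<pi>_en: "\<pi> (en j) = P j" if "j < ?n" for j
    using bij_betw_inv_into_left[OF en] that by (simp add: \<pi>_def)
  have row: "\<pi> (en j) i \<in> A (en j) \<longleftrightarrow> i \<in> cyclic_block k ell j" if "j < ?n" "i < k" for j i
  proof -
    have "inj_on (P j) {..<k}" "P j ` cyclic_block k ell j = A (en j)"
      using P[OF that(1)] bij_betw_imp_inj_on by auto
    then show ?thesis
      using inj_on_image_mem_iff[of "P j" "{..<k}" i "cyclic_block k ell j"]
        cyclic_block_subset[OF assms(2)] \<pi>_en[OF that(1)] that(2) by simp
  qed
  have en_surj: "\<exists>j < ?n. a = en j" if "a \<in> S" for a
    using en that unfolding bij_betw_def by auto
  have "bij_betw (\<pi> a) {..<k} {..<k}" if "a \<in> S" for a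
    using en_surj[OF that] P \<pi>_en by auto
  moreover have "(\<exists>a\<in>S. \<pi> a i \<in> A a) \<and> (\<exists>a\<in>S. \<pi> a i \<notin> A a)" if i: "i < k" for i
  proof -
    obtain j1 j2 where j: "j1 < ?n" "i \<in> cyclic_block k ell j1" "j2 < ?n" "i \<notin> cyclic_block k ell j2"
      using cyclic_blocks_cover[OF i, where n = "?n" and ell = ell] cyclic_blocks_avoid[OF i, where n = "?n" and ell = ell]
        ell_le assms(4,5) sum_eq by auto
    moreover have "en j1 \<in> S" "en j2 \<in> S"
      using en j(1,3) by (simp_all add: bij_betw_apply)
    ultimately show ?thesis
      using row i by blast
  qed
  ultimately show ?thesis
    by blast
qed

section \<open>Matchings across a cut in a tree of cliques\<close>

definition rooted_subtree :: "'a list \<Rightarrow> 'a list set \<Rightarrow> bool" where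
  "rooted_subtree q S \<longleftrightarrow> q \<in> S \<and> (\<forall>a\<in>S. a \<noteq> q \<longrightarrow> (\<exists>a' x. a = a' @ [x] \<and> a' \<in> S))"

lemma rooted_subtree_change_from_root:
  assumes "rooted_subtree q S" "a \<in> S" "P a \<noteq> P q"
  shows "\<exists>a' x. a' \<in> S \<and> a' @ [x] \<in> S \<and> P a' \<noteq> P (a' @ [x])"
  using assms(2,3)
proof (induction a rule: rev_induct)
  case Nil
  then have False
    using assms(1) unfolding rooted_subtree_def by auto
  then show ?case ..
next
  case (snoc x a)
  then have "a \<in> S"
    using assms(1) unfolding rooted_subtree_def by fastforce
  show ?case
  proof (cases "P a = P (a @ [x])")
    case True
    then have "P a \<noteq> P q"
      using snoc.prems(2) by simp
    then show ?thesis
      using snoc.IH \<open>a \<in> S\<close> by blast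
  next
    case False
    then show ?thesis
      using \<open>a \<in> S\<close> snoc.prems(1) by blast
  qed
qed

lemma rooted_subtree_change:
  assumes "rooted_subtree q S" "a1 \<in> S" "P a1" "a2 \<in> S" "\<not> P a2"
  shows "\<exists>a x. a \<in> S \<and> a @ [x] \<in> S \<and> P a \<noteq> P (a @ [x])"
proof (cases "P q")
  case True
  then show ?thesis
    using rooted_subtree_change_from_root[where P = P, OF assms(1,4)] assms(5) by blast
next
  case False
  then show ?thesis
    using rooted_subtree_change_from_root[where P = P, OF assms(1,2)] assms(3) by blast
qed

lemma CT_tree_edge:
  assumes "a @ [x] \<in> tree_nodes r" "i < k" "j < k"
  shows "{(a, i), (a @ [x], j)} \<in> snd (CT r k)"
proof -
  have "{a, a @ [x]} \<in> tree_edges r"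
    using assms(1) by (auto simp: tree_nodes_def tree_edges_def)
  then show ?thesis
    using assms(2,3) unfolding CT_def snd_conv
    by (intro UnI2 CollectI exI[of _ a] exI[of _ "a @ [x]"] exI[of _ i] exI[of _ j]) simp
qed

lemma CT_vertex_neighbour:
  assumes "1 \<le> r" "(a, i) \<in> fst (CT r k)"
  shows "\<exists>u. u \<noteq> (a, i) \<and> {(a, i), u} \<in> snd (CT r k)"
proof -
  have a: "a \<in> tree_nodes r" and i: "i < k"
    using assms(2) by (simp_all add: CT_def)
  show ?thesis
  proof (cases a rule: rev_cases)
    case Nil
    have "[] @ [True] \<in> tree_nodes r"
      using assms(1) by (simp add: tree_nodes_def)
    then have "{(a, i), ([True], i)} \<in> snd (CT r k)"
      using CT_tree_edge[OF _ i i, of "[]" True r] Nil by simp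
    then show ?thesis
      using Nil by (intro exI[of _ "([True], i)"]) simp
  next
    case (snoc a' x)
    then have "{(a', i), (a, i)} \<in> snd (CT r k)"
      using CT_tree_edge[OF _ i i, of a' x r] a by simp
    then have "{(a, i), (a', i)} \<in> snd (CT r k)"
      by (simp only: insert_commute)
    then show ?thesis
      using snoc by (intro exI[of _ "(a', i)"]) simp
  qed
qed

definition balanced :: "nat \<Rightarrow> 'a set \<Rightarrow> 'a set \<Rightarrow> bool" where
  "balanced k L X \<longleftrightarrow> k \<le> card (L \<inter> X) \<and> k \<le> card (X - L)"

lemma balanced_mono:
  assumes "balanced k L X" "X \<subseteq> Y" "finite Y"
  shows "balanced k L Y"
proof -
  have "card (L \<inter> X) \<le> card (L \<inter> Y)" "card (X - L) \<le> card (Y - L)"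
    using assms(2,3) by (auto intro!: card_mono)
  then show ?thesis
    using assms(1) by (auto simp: balanced_def)
qed

lemma balanced_layers:
  assumes "finite S" "0 < k" "balanced k L (S \<times> {..<k})"
  shows "\<exists>\<pi>. (\<forall>a\<in>S. bij_betw (\<pi> a) {..<k} {..<k}) \<and>
           (\<forall>i<k. (\<exists>a\<in>S. (a, \<pi> a i) \<in> L) \<and> (\<exists>a\<in>S. (a, \<pi> a i) \<notin> L))"
proof -
  define A where "A a = {i. i < k \<and> (a, i) \<in> L}" for a
  have A_sub: "A a \<subseteq> {..<k}" for a
    by (auto simp: A_def)
  have "L \<inter> (S \<times> {..<k}) = Sigma S A"
    by (auto simp: A_def)
  moreover have "finite (A a)" for a
    using A_sub finite_subset by blast
  ultimately have "card (L \<inter> (S \<times> {..<k})) = (\<Sum>a\<in>S. card (A a))"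
    using assms(1) by simp
  moreover have "card (S \<times> {..<k} - L) + card (L \<inter> (S \<times> {..<k})) = card S * k"
    using assms(1) card_Diff_subset_Int[of "S \<times> {..<k}" L] card_mono[of "S \<times> {..<k}" "L \<inter> (S \<times> {..<k})"]
    by (simp add: card_cartesian_product Int_commute)
  ultimately have "\<exists>\<pi>. (\<forall>a\<in>S. bij_betw (\<pi> a) {..<k} {..<k}) \<and>
      (\<forall>i<k. (\<exists>a\<in>S. \<pi> a i \<in> A a) \<and> (\<exists>a\<in>S. \<pi> a i \<notin> A a))"
    using assms(3) by (intro exists_row_permutations[OF assms(1,2) A_sub]) (auto simp: balanced_def)
  then obtain \<pi> where \<pi>: "\<forall>a\<in>S. bij_betw (\<pi> a) {..<k} {..<k}"
    and rows: "\<forall>i<k. (\<exists>a\<in>S. \<pi> a i \<in> A a) \<and> (\<exists>a\<in>S. \<pi> a i \<notin> A a)"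
    by blast
  have "\<pi> a i \<in> A a \<longleftrightarrow> (a, \<pi> a i) \<in> L" if "a \<in> S" "i < k" for a i
    using \<pi> that bij_betw_apply by (fastforce simp: A_def)
  then show ?thesis
    using \<pi> rows by metis
qed

lemma layer_edges_matching:
  assumes S: "S \<subseteq> tree_nodes r" and \<pi>: "\<And>a. a \<in> S \<Longrightarrow> bij_betw (\<pi> a) {..<k} {..<k}"
    and ax: "\<And>i. i < k \<Longrightarrow> a i \<in> S \<and> a i @ [x i] \<in> S \<and>
      ((a i, \<pi> (a i) i) \<in> L) \<noteq> ((a i @ [x i], \<pi> (a i @ [x i]) i) \<in> L)"
  shows "\<exists>M. matching (CT r k) L M \<and> card M = k \<and> M \<subseteq> (S \<times> {..<k}) \<times> (S \<times> {..<k})"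
proof -
  define v where "v i a = (a, \<pi> a i)" for i a
  have v_less: "\<pi> a i < k" if "a \<in> S" "i < k" for a i
    using \<pi>[OF that(1)] that(2) bij_betw_apply by fastforce
  have v_inj: "i = i'" if "a \<in> S" "a' \<in> S" "i < k" "i' < k" "v i a = v i' a'" for i i' a a'
    using that \<pi> by (auto simp: v_def bij_betw_def dest: inj_onD)
  define e where "e i = (if v i (a i) \<in> L then (v i (a i), v i (a i @ [x i]))
                         else (v i (a i @ [x i]), v i (a i)))" for i
  have ends: "\<exists>b\<in>S. fst (e i) = v i b" "\<exists>b\<in>S. snd (e i) = v i b" if "i < k" for i
    using ax[OF that] by (auto simp: e_def)
  have "inj_on (fst \<circ> e) {..<k}"
  proof (rule inj_onI)
    fix i i' assume "i \<in> {..<k}" "i' \<in> {..<k}" "(fst \<circ> e) i = (fst \<circ> e) i'"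
    then show "i = i'"
      using ends(1)[of i] ends(1)[of i'] v_inj by fastforce
  qed
  moreover have "inj_on (snd \<circ> e) {..<k}"
  proof (rule inj_onI)
    fix i i' assume "i \<in> {..<k}" "i' \<in> {..<k}" "(snd \<circ> e) i = (snd \<circ> e) i'"
    then show "i = i'"
      using ends(2)[of i] ends(2)[of i'] v_inj by fastforce
  qed
  ultimately have inj: "inj_on e {..<k}" "inj_on fst (e ` {..<k})" "inj_on snd (e ` {..<k})"
    by (auto intro: inj_on_imageI inj_on_imageI2)
  have "matching (CT r k) L (e ` {..<k})"
    unfolding matching_def
  proof (intro conjI ballI finite_imageI finite_lessThan inj(2,3))
    fix d assume "d \<in> e ` {..<k}"
    then obtain i where i: "i < k" "d = e i"
      by blast
    then show "fst d \<in> L" "snd d \<notin> L"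
      using ax[OF i(1)] by (auto simp: e_def v_def)
    have "a i @ [x i] \<in> tree_nodes r"
      using ax[OF i(1)] S by blast
    then have "{v i (a i), v i (a i @ [x i])} \<in> snd (CT r k)"
      using CT_tree_edge v_less ax[OF i(1)] i(1) by (simp add: v_def)
    moreover have "{fst d, snd d} = {v i (a i), v i (a i @ [x i])}"
      using i by (auto simp: e_def)
    ultimately show "{fst d, snd d} \<in> snd (CT r k)"
      by simp
  qed
  moreover have "e i \<in> (S \<times> {..<k}) \<times> (S \<times> {..<k})" if "i < k" for i
    using ax[OF that] v_less[OF _ that] by (simp add: e_def v_def)
  then have "e ` {..<k} \<subseteq> (S \<times> {..<k}) \<times> (S \<times> {..<k})"
    by blast
  moreover have "card (e ` {..<k}) = k"
    using card_image[OF inj(1)] by simp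
  ultimately show ?thesis
    by blast
qed

(* Each layer {(a, pi a i) | a in S} is a copy of the tree S meeting L and its complement, so it
   contains a tree edge leaving L; distinct layers are disjoint. *)
lemma rooted_subtree_matching:
  assumes "0 < k" "S \<subseteq> tree_nodes r" "finite S" "rooted_subtree q S"
    and "balanced k L (S \<times> {..<k})"
  shows "\<exists>M. matching (CT r k) L M \<and> card M = k \<and> M \<subseteq> (S \<times> {..<k}) \<times> (S \<times> {..<k})"
proof -
  obtain \<pi> where \<pi>: "\<And>a. a \<in> S \<Longrightarrow> bij_betw (\<pi> a) {..<k} {..<k}"
    and rows: "\<And>i. i < k \<Longrightarrow> (\<exists>a\<in>S. (a, \<pi> a i) \<in> L) \<and> (\<exists>a\<in>S. (a, \<pi> a i) \<notin> L)"
    using balanced_layers[OF assms(3,1,5)] by blast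
  have "\<exists>a x. a \<in> S \<and> a @ [x] \<in> S \<and> ((a, \<pi> a i) \<in> L) \<noteq> ((a @ [x], \<pi> (a @ [x]) i) \<in> L)"
    if i: "i < k" for i
  proof -
    obtain a1 a2 where "a1 \<in> S" "(a1, \<pi> a1 i) \<in> L" "a2 \<in> S" "(a2, \<pi> a2 i) \<notin> L"
      using rows[OF i] by blast
    then show ?thesis
      by (rule rooted_subtree_change[OF assms(4), where P = "\<lambda>a. (a, \<pi> a i) \<in> L"])
  qed
  then obtain a x where "\<And>i. i < k \<Longrightarrow> a i \<in> S \<and> a i @ [x i] \<in> S \<and>
      ((a i, \<pi> (a i) i) \<in> L) \<noteq> ((a i @ [x i], \<pi> (a i @ [x i]) i) \<in> L)"
    by metis
  from layer_edges_matching[OF assms(2) \<pi> this] show ?thesis .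
qed

definition subtree :: "bool list \<Rightarrow> nat \<Rightarrow> bool list set" where
  "subtree p h = {p @ w | w. length w \<le> h}"

lemma finite_subtree: "finite (subtree p h)"
proof -
  have "subtree p h = (@) p ` {w. set w \<subseteq> UNIV \<and> length w \<le> h}"
    by (auto simp: subtree_def)
  then show ?thesis
    using finite_lists_length_le[of "UNIV :: bool set" h] by simp
qed

lemma subtree_subset_tree_nodes: "length p + h \<le> r \<Longrightarrow> subtree p h \<subseteq> tree_nodes r"
  by (auto simp: subtree_def tree_nodes_def)

lemma rooted_subtree_subtree: "rooted_subtree p (subtree p h)"
  unfolding rooted_subtree_def subtree_def
proof (intro conjI ballI impI)
  fix a assume "a \<in> {p @ w |w. length w \<le> h}" "a \<noteq> p"
  then obtain w where w: "a = p @ w" "length w \<le> h" "w \<noteq> []"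
    by auto
  then obtain w' x where "a = p @ w' @ [x]" "length w' < h"
    by (cases w rule: rev_cases) auto
  then show "\<exists>a' x. a = a' @ [x] \<and> a' \<in> {p @ w |w. length w \<le> h}"
    by fastforce
qed (use append_Nil2 in fastforce)

lemma three_le_card_subtree:
  assumes "1 \<le> h"
  shows "3 \<le> card (subtree p h)"
proof -
  have "{p, p @ [True], p @ [False]} \<subseteq> subtree p h"
    using assms unfolding subtree_def by force
  then have "card {p, p @ [True], p @ [False]} \<le> card (subtree p h)"
    by (rule card_mono[OF finite_subtree])
  then show ?thesis
    by simp
qed

lemma subtree_append_subset: "length g + h \<le> h' \<Longrightarrow> subtree (p @ g) h \<subseteq> subtree p h'"
  by (force simp: subtree_def)

lemma subtree_append_disjoint:
  "length g = length g' \<Longrightarrow> g \<noteq> g' \<Longrightarrow> subtree (p @ g) h \<inter> subtree (p @ g') h = {}"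
  by (auto simp: subtree_def)

lemma rooted_subtree_Diff_subtree:
  assumes "length g = 2"
  shows "rooted_subtree p (subtree p (h + 2) - subtree (p @ g) h)"
  unfolding rooted_subtree_def
proof (intro conjI ballI impI)
  show "p \<in> subtree p (h + 2) - subtree (p @ g) h"
    using assms by (auto simp: subtree_def)
next
  fix a assume a: "a \<in> subtree p (h + 2) - subtree (p @ g) h" "a \<noteq> p"
  then obtain w x where w: "a = p @ w @ [x]" "length w < h + 2"
    using rooted_subtree_subtree[of p "h + 2"] unfolding rooted_subtree_def subtree_def by force
  have "p @ w \<notin> subtree (p @ g) h"
  proof
    assume "p @ w \<in> subtree (p @ g) h"
    then obtain u where "w = g @ u"
      by (auto simp: subtree_def)
    then have "a \<in> subtree (p @ g) h"
      using w assms by (auto simp: subtree_def)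
    then show False
      using a(1) by blast
  qed
  then show "\<exists>a' x. a = a' @ [x] \<and> a' \<in> subtree p (h + 2) - subtree (p @ g) h"
    using w by (auto simp: subtree_def)
qed

definition prefix_vertices :: "'v cnf_var list \<Rightarrow> nat \<Rightarrow> 'v set" where
  "prefix_vertices SV t = {v. Inl v \<in> set (take t SV)}"

lemma prefix_vertices_mono: "t \<le> t' \<Longrightarrow> prefix_vertices SV t \<subseteq> prefix_vertices SV t'"
  using set_take_subset_set_take by (fastforce simp: prefix_vertices_def)

lemma card_prefix_vertices_Suc:
  assumes "finite X"
  shows "card (prefix_vertices SV (Suc t) \<inter> X) \<le> Suc (card (prefix_vertices SV t \<inter> X))"
proof -
  have "set (take (Suc t) SV) \<subseteq> insert (SV ! t) (set (take t SV))"
    by (cases "t < length SV") (auto simp: take_Suc_conv_app_nth)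
  have "prefix_vertices SV (Suc t) \<subseteq> insert (projl (SV ! t)) (prefix_vertices SV t)"
  proof
    fix v assume "v \<in> prefix_vertices SV (Suc t)"
    then have "Inl v = SV ! t \<or> Inl v \<in> set (take t SV)"
      using \<open>set (take (Suc t) SV) \<subseteq> _\<close> by (auto simp: prefix_vertices_def)
    then show "v \<in> insert (projl (SV ! t)) (prefix_vertices SV t)"
      by (metis insert_iff mem_Collect_eq prefix_vertices_def sum.sel(1))
  qed
  then have "prefix_vertices SV (Suc t) \<inter> X \<subseteq> insert (projl (SV ! t)) (prefix_vertices SV t \<inter> X)"
    by blast
  then have "card (prefix_vertices SV (Suc t) \<inter> X) \<le> card (insert (projl (SV ! t)) (prefix_vertices SV t \<inter> X))"
    using assms by (intro card_mono) auto
  also have "\<dots> \<le> Suc (card (prefix_vertices SV t \<inter> X))"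
    using assms by (simp add: card_insert_le_m1 card_insert_if)
  finally show ?thesis .
qed

lemma exists_prefix_vertices_card_eq:
  assumes "finite X" "m \<le> card (prefix_vertices SV T \<inter> X)"
  shows "\<exists>t. card (prefix_vertices SV t \<inter> X) = m"
  using assms(2)
proof (induction T)
  case 0
  then show ?case
    by (intro exI[of _ 0]) (simp add: prefix_vertices_def)
next
  case (Suc T)
  show ?case
  proof (cases "m \<le> card (prefix_vertices SV T \<inter> X)")
    case True
    then show ?thesis
      using Suc.IH by blast
  next
    case False
    then have "card (prefix_vertices SV (Suc T) \<inter> X) = m"
      using Suc.prems card_prefix_vertices_Suc[OF assms(1), of SV T] by linarith
    then show ?thesis
      by blast
  qed
qed

lemma exists_balanced_prefix:
  assumes "finite X" "2 * k \<le> card X" "X \<subseteq> prefix_vertices SV (length SV)"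
  shows "\<exists>t. balanced k (prefix_vertices SV t) X"
proof -
  have "prefix_vertices SV (length SV) \<inter> X = X"
    using assms(3) by blast
  then obtain t where t: "card (prefix_vertices SV t \<inter> X) = k"
    using exists_prefix_vertices_card_eq[OF assms(1), of k SV "length SV"] assms(2) by auto
  moreover have "card (X - prefix_vertices SV t) = card X - k"
    using t assms(1) card_Diff_subset_Int[of "X" "prefix_vertices SV t"] by (simp add: Int_commute)
  ultimately show ?thesis
    using assms(2) by (auto simp: balanced_def)
qed

(* The grandchild b has the median balancing time: a is balanced no later, c no earlier. *)
lemma subtree_matching_step:
  assumes "0 < k" "length p + h + 2 \<le> r"
    and "length a = 2" "length b = 2" "length c = 2" "a \<noteq> b" "c \<noteq> b"
    and "ta \<le> tb" "tb \<le> tc"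
    and "k \<le> card (prefix_vertices SV ta \<inter> (subtree (p @ a) h \<times> {..<k}))"
    and "k \<le> card (subtree (p @ c) h \<times> {..<k} - prefix_vertices SV tc)"
    and "matching (CT r k) (prefix_vertices SV tb) Mb"
    and "Mb \<subseteq> (subtree (p @ b) h \<times> {..<k}) \<times> (subtree (p @ b) h \<times> {..<k})"
  shows "balanced k (prefix_vertices SV tb) (subtree p (h + 2) \<times> {..<k}) \<and>
    (\<exists>M. matching (CT r k) (prefix_vertices SV tb) M \<and> card M = k + card Mb \<and>
         M \<subseteq> (subtree p (h + 2) \<times> {..<k}) \<times> (subtree p (h + 2) \<times> {..<k}))"
proof -
  let ?L = "prefix_vertices SV tb"
  define S where "S = subtree p (h + 2) - subtree (p @ b) h"
  have sub: "subtree (p @ a) h \<subseteq> S" "subtree (p @ c) h \<subseteq> S"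
    using subtree_append_subset[of a h "h + 2" p] subtree_append_subset[of c h "h + 2" p]
      subtree_append_disjoint[of a b p h] subtree_append_disjoint[of c b p h] assms(3-7)
    by (auto simp: S_def)
  have finS: "finite (S \<times> {..<k})"
    by (simp add: S_def finite_subtree)
  have "card (prefix_vertices SV ta \<inter> (subtree (p @ a) h \<times> {..<k})) \<le> card (?L \<inter> (S \<times> {..<k}))"
    using prefix_vertices_mono[OF assms(8), of SV] sub(1) finS by (intro card_mono) auto
  moreover have "card (subtree (p @ c) h \<times> {..<k} - prefix_vertices SV tc) \<le> card (S \<times> {..<k} - ?L)"
    using prefix_vertices_mono[OF assms(9), of SV] sub(2) finS by (intro card_mono) auto
  ultimately have bal: "balanced k ?L (S \<times> {..<k})"
    using assms(10,11) by (simp add: balanced_def)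
  have S_tree: "S \<subseteq> tree_nodes r"
    using subtree_subset_tree_nodes[OF assms(2)[unfolded add.assoc]] by (auto simp: S_def)
  have "finite S" "rooted_subtree p S"
    unfolding S_def using finite_subtree rooted_subtree_Diff_subtree[OF assms(4)] by auto
  then obtain M where M: "matching (CT r k) ?L M" "card M = k" "M \<subseteq> (S \<times> {..<k}) \<times> (S \<times> {..<k})"
    using rooted_subtree_matching[OF assms(1) S_tree _ _ bal] by blast
  have disj: "(S \<times> {..<k}) \<inter> (subtree (p @ b) h \<times> {..<k}) = {}"
    by (auto simp: S_def)
  have whole: "S \<times> {..<k} \<subseteq> subtree p (h + 2) \<times> {..<k}"
      "subtree (p @ b) h \<times> {..<k} \<subseteq> subtree p (h + 2) \<times> {..<k}"
    using subtree_append_subset[of b h "h + 2" p] assms(4) by (auto simp: S_def)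
  have "balanced k ?L (subtree p (h + 2) \<times> {..<k})"
    using balanced_mono[OF bal whole(1)] by (simp add: finite_subtree)
  moreover have "matching (CT r k) ?L (M \<union> Mb)" "card (M \<union> Mb) = k + card Mb"
    using matching_Un[OF M(1) assms(12) M(3) assms(13) disj] M(2) by simp_all
  moreover have "M \<union> Mb \<subseteq> (subtree p (h + 2) \<times> {..<k}) \<times> (subtree p (h + 2) \<times> {..<k})"
    using M(3) assms(13) whole by blast
  ultimately show ?thesis
    by blast
qed

lemma obtain_median:
  fixes f :: "'a \<Rightarrow> 'b::linorder"
  assumes "x \<noteq> y" "y \<noteq> z" "x \<noteq> z"
  obtains a b c where "a \<in> {x, y, z}" "b \<in> {x, y, z}" "c \<in> {x, y, z}" "a \<noteq> b" "c \<noteq> b"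
    "f a \<le> f b" "f b \<le> f c"
proof -
  consider "f x \<le> f y" "f y \<le> f z" | "f z \<le> f y" "f y \<le> f x" | "f y \<le> f x" "f x \<le> f z"
    | "f z \<le> f x" "f x \<le> f y" | "f x \<le> f z" "f z \<le> f y" | "f y \<le> f z" "f z \<le> f x"
    using linear[of "f x" "f y"] linear[of "f y" "f z"] linear[of "f x" "f z"] by blast
  then show ?thesis
    using that assms by cases (metis insertCI)+
qed

lemma subtree_prefix_matching_base:
  assumes "0 < k" "1 \<le> h" "length p + h \<le> r" "tree_nodes r \<times> {..<k} \<subseteq> prefix_vertices SV (length SV)"
  shows "\<exists>t. balanced k (prefix_vertices SV t) (subtree p h \<times> {..<k}) \<and>
    (\<exists>M. matching (CT r k) (prefix_vertices SV t) M \<and> card M = k \<and>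
         M \<subseteq> (subtree p h \<times> {..<k}) \<times> (subtree p h \<times> {..<k}))"
proof -
  let ?X = "subtree p h \<times> {..<k}"
  have tree: "subtree p h \<subseteq> tree_nodes r"
    using subtree_subset_tree_nodes[OF assms(3)] .
  have "2 * k \<le> card ?X"
    using three_le_card_subtree[OF assms(2), of p] by (simp add: card_cartesian_product)
  then obtain t where t: "balanced k (prefix_vertices SV t) ?X"
    using exists_balanced_prefix[of ?X k SV] assms(4) tree by (auto simp: finite_subtree)
  then show ?thesis
    using rooted_subtree_matching[OF assms(1) tree finite_subtree rooted_subtree_subtree] by blast
qed

lemma subtree_prefix_matching:
  assumes "0 < k" "tree_nodes r \<times> {..<k} \<subseteq> prefix_vertices SV (length SV)"
  shows "1 \<le> h \<Longrightarrow> length p + h \<le> r \<Longrightarrow>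
    \<exists>t. balanced k (prefix_vertices SV t) (subtree p h \<times> {..<k}) \<and>
      (\<exists>M. matching (CT r k) (prefix_vertices SV t) M \<and> card M = k * ((h + 1) div 2) \<and>
           M \<subseteq> (subtree p h \<times> {..<k}) \<times> (subtree p h \<times> {..<k}))"
proof (induction h arbitrary: p rule: less_induct)
  case (less h)
  show ?case
  proof (cases "h \<le> 2")
    case True
    then have "(h + 1) div 2 = 1"
      using less.prems(1) by linarith
    then show ?thesis
      using subtree_prefix_matching_base[OF assms(1) less.prems assms(2)] by simp
  next
    case False
    define h' where "h' = h - 2"
    have h': "h = h' + 2" "1 \<le> h'"
      using False by (auto simp: h'_def)
    have "\<exists>t. balanced k (prefix_vertices SV t) (subtree (p @ g) h' \<times> {..<k}) \<and>
      (\<exists>M. matching (CT r k) (prefix_vertices SV t) M \<and> card M = k * ((h' + 1) div 2) \<and>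
           M \<subseteq> (subtree (p @ g) h' \<times> {..<k}) \<times> (subtree (p @ g) h' \<times> {..<k}))"
      if "length g = 2" for g
      using less.IH[of h' "p @ g"] less.prems(2) h' that by simp
    then obtain t M where tM: "\<And>g. length g = 2 \<Longrightarrow>
        balanced k (prefix_vertices SV (t g)) (subtree (p @ g) h' \<times> {..<k}) \<and>
        matching (CT r k) (prefix_vertices SV (t g)) (M g) \<and> card (M g) = k * ((h' + 1) div 2) \<and>
        M g \<subseteq> (subtree (p @ g) h' \<times> {..<k}) \<times> (subtree (p @ g) h' \<times> {..<k})"
      by metis
    obtain a b c where abc: "a \<in> {[False, False], [False, True], [True, False]}"
      "b \<in> {[False, False], [False, True], [True, False]}" "c \<in> {[False, False], [False, True], [True, False]}"
      "a \<noteq> b" "c \<noteq> b" "t a \<le> t b" "t b \<le> t c"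
      by (rule obtain_median[of "[False, False]" "[False, True]" "[True, False]" t]) auto
    then have len: "length a = 2" "length b = 2" "length c = 2"
      by auto
    have "balanced k (prefix_vertices SV (t b)) (subtree p (h' + 2) \<times> {..<k}) \<and>
      (\<exists>M'. matching (CT r k) (prefix_vertices SV (t b)) M' \<and> card M' = k + card (M b) \<and>
         M' \<subseteq> (subtree p (h' + 2) \<times> {..<k}) \<times> (subtree p (h' + 2) \<times> {..<k}))"
      using tM[OF len(1)] tM[OF len(3)] tM[OF len(2)] less.prems(2) h'(1)
      by (intro subtree_matching_step[OF assms(1) _ len abc(4,5,6,7)]) (auto simp: balanced_def)
    moreover have "k + card (M b) = k * ((h + 1) div 2)"
      using tM[OF len(2)] h'(1) by simp
    ultimately show ?thesis
      using h'(1) by auto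
  qed
qed

lemma c_NSOBDD_CT_size_bound:
  assumes "0 < k" "c_NSOBDD c B" "computes B (F r k)"
  shows "2 ^ (k * ((r + 1) div 2)) \<le> card (bp_nodes B) ^ (2 * c - 1)"
proof -
  obtain SV where wf: "bp_wf B" and SV: "set SV = bp_vars B" "c_sorted c SV B"
    using assms(2) by (auto simp: c_NSOBDD_iff)
  have "bp_root B \<in> bp_nodes B" "finite (bp_nodes B)"
    using wf by (simp_all add: bp_wf_def)
  then have nodes_pos: "0 < card (bp_nodes B)"
    using card_gt_0_iff by blast
  show ?thesis
  proof (cases "r = 0")
    case True
    then show ?thesis
      using nodes_pos by simp
  next
    case False
    have "tree_nodes r \<times> {..<k} \<subseteq> prefix_vertices SV (length SV)"
    proof
      fix v assume "v \<in> tree_nodes r \<times> {..<k}"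
      then have "(fst v, snd v) \<in> fst (CT r k)"
        by (simp add: CT_def)
      then obtain u where "{v, u} \<in> snd (CT r k)" "u \<noteq> v"
        using CT_vertex_neighbour[of r "fst v" "snd v" k] False by auto
      then have "Inl v \<in> bp_vars B"
        using computes_graph_cnf_vertex_var assms(3) unfolding F_def by metis
      then show "v \<in> prefix_vertices SV (length SV)"
        using SV(1) by (simp add: prefix_vertices_def)
    qed
    then obtain t M where M: "matching (CT r k) (prefix_vertices SV t) M" "card M = k * ((r + 1) div 2)"
      using subtree_prefix_matching[OF assms(1), of r SV r "[]"] False by auto
    then have "fooling_family (F r k) (set (take t SV)) (matching_assignment M) (Pow M)"
      unfolding F_def by (intro matching_fooling_family) (simp add: prefix_vertices_def)
    then have "card (Pow M) \<le> card (bp_nodes B) ^ (2 * c - 1)"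
      by (rule fooling_family_card_le[OF wf SV(2) assms(3)])
    then show ?thesis
      using M card_Pow[of M] by (simp add: matching_def)
  qed
qed

lemma finite_tree_nodes: "finite (tree_nodes r)"
  using finite_lists_length_le[of "UNIV :: bool set" r] by (simp add: tree_nodes_def)

lemma card_tree_nodes_less: "card (tree_nodes r) < 2 ^ Suc r"
proof -
  have "card (tree_nodes r) = (\<Sum>i\<le>r. 2 ^ i)"
    using card_lists_length_le[of "UNIV :: bool set" r] by (simp add: tree_nodes_def)
  also have "\<dots> = 2 ^ Suc r - 1"
    using sum_power2[of "Suc r"] by (simp add: atLeast0LessThan lessThan_Suc_atMost)
  finally show ?thesis
    by simp
qed

lemma CT_edges_subset:
  "snd (CT r k) \<subseteq> (\<lambda>(a, i, j). {(a, i), (a, j)}) ` (tree_nodes r \<times> {..<k} \<times> {..<k})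
     \<union> (\<lambda>(b, i, j). {(butlast b, i), (b, j)}) ` (tree_nodes r \<times> {..<k} \<times> {..<k})"
    (is "_ \<subseteq> ?f1 ` ?I \<union> ?f2 ` ?I")
proof
  fix d assume "d \<in> snd (CT r k)"
  then consider a i j where "d = {(a, i), (a, j)}" "a \<in> tree_nodes r" "i < k" "j < k"
    | a b i j where "d = {(a, i), (b, j)}" "{a, b} \<in> tree_edges r" "i < k" "j < k"
    by (auto simp: CT_def)
  then show "d \<in> ?f1 ` ?I \<union> ?f2 ` ?I"
  proof cases
    case 1
    then have "d = ?f1 (a, i, j)"
      by simp
    then show ?thesis
      using 1 by blast
  next
    case (2 a b i j)
    then obtain w x where wx: "{a, b} = {w, w @ [x]}" "w @ [x] \<in> tree_nodes r"
      by (auto simp: tree_edges_def tree_nodes_def)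
    then have "d = ?f2 (w @ [x], i, j) \<or> d = ?f2 (w @ [x], j, i)"
      using 2(1) by (auto simp: doubleton_eq_iff)
    then show ?thesis
      using wx(2) 2(3,4) by blast
  qed
qed

lemma card_graph_cnf_vars_CT: "card (graph_cnf_vars (CT r k)) \<le> 6 * 2 ^ r * k ^ 2"
proof -
  let ?N = "card (tree_nodes r)" and ?I = "tree_nodes r \<times> {..<k} \<times> {..<k}"
  let ?f1 = "\<lambda>(a, i, j). {(a, i), (a, j)}" and ?f2 = "\<lambda>(b, i, j). {(butlast b, i), (b, j)}"
  have fin: "finite ?I"
    by (simp add: finite_tree_nodes)
  have "card (snd (CT r k)) \<le> card (?f1 ` ?I \<union> ?f2 ` ?I)"
    using CT_edges_subset fin by (intro card_mono) auto
  also have "\<dots> \<le> card (?f1 ` ?I) + card (?f2 ` ?I)"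
    by (rule card_Un_le)
  also have "\<dots> \<le> card ?I + card ?I"
    by (intro add_mono card_image_le fin)
  finally have edges: "card (snd (CT r k)) \<le> 2 * (?N * k * k)"
    by (simp add: card_cartesian_product)
  have "card (graph_cnf_vars (CT r k))
      \<le> card (Inl ` fst (CT r k) :: (bool list \<times> nat) cnf_var set)
         + card (Inr ` snd (CT r k) :: (bool list \<times> nat) cnf_var set)"
    unfolding graph_cnf_vars_def by (rule card_Un_le)
  also have "\<dots> \<le> ?N * k + card (snd (CT r k))"
    by (simp add: card_image card_cartesian_product CT_def)
  also have "\<dots> \<le> ?N * k * k + 2 * (?N * k * k)"
    using edges le_square[of k] by (intro add_mono mult_le_mono2) (simp_all add: mult.assoc)
  also have "\<dots> = 3 * ?N * k ^ 2"
    by (simp add: power2_eq_square algebra_simps)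
  also have "\<dots> \<le> 3 * 2 ^ Suc r * k ^ 2"
    using card_tree_nodes_less[of r] by simp
  finally show ?thesis
    by simp
qed

lemma powr_le_of_power_bound:
  fixes s \<rho> :: real and g n r k :: nat
  assumes "2 ^ g \<le> s ^ n" "0 < n" "0 < s" "0 \<le> \<rho>" "\<rho> \<le> 2 ^ r" "r * k \<le> 2 * g"
  shows "\<rho> powr (k / (2 * n)) \<le> s"
proof -
  have "\<rho> powr (k / (2 * n)) \<le> (2 ^ r) powr (k / (2 * n))"
    using assms(4,5) by (intro powr_mono2) auto
  also have "\<dots> = 2 powr (r * k / (2 * n))"
    by (simp add: powr_realpow[symmetric] powr_powr)
  also have "\<dots> \<le> 2 powr (g / n)"
  proof (rule powr_mono)
    have "real (r * k) \<le> real (2 * g)"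
      using assms(6) by linarith
    then show "r * k / (2 * n) \<le> g / n"
      using assms(2) by (simp add: field_simps)
  qed simp
  also have "\<dots> = (2 ^ g) powr (1 / n)"
    by (simp add: powr_realpow[symmetric] powr_powr)
  also have "\<dots> \<le> (s ^ n) powr (1 / n)"
    using assms(1) by (intro powr_mono2) auto
  also have "\<dots> = s"
    using assms(2,3) by (simp add: powr_realpow[symmetric] powr_powr)
  finally show ?thesis .
qed

theorem lemma2:
  fixes c r k :: nat and B :: "('n, (bool list \<times> nat) cnf_var) bp"
  assumes "c \<ge> 1" and "k \<ge> 1"
    and "c_NSOBDD c B" and "computes B (F r k)"
  shows "real (bp_size B) \<ge>
    (real (card (graph_cnf_vars (CT r k))) / (6 * real k ^ 2)) powr (real k / (4 * real c - 2))"
proof -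
  let ?n = "2 * c - 1" and ?m = "card (graph_cnf_vars (CT r k))"
  have size: "2 ^ (k * ((r + 1) div 2)) \<le> card (bp_nodes B) ^ ?n"
    using c_NSOBDD_CT_size_bound[OF _ assms(3,4)] assms(2) by simp
  have "real ?m \<le> 6 * 2 ^ r * real k ^ 2"
    using of_nat_mono[OF card_graph_cnf_vars_CT[of r k], where 'a = real] by simp
  then have "real ?m / (6 * real k ^ 2) \<le> 2 ^ r"
    using assms(2) by (simp add: divide_le_eq mult.commute mult.left_commute)
  moreover have "4 * real c - 2 = 2 * real ?n"
    using assms(1) by (simp add: of_nat_diff)
  moreover have "0 < bp_size B"
    using assms(3) card_gt_0_iff by (fastforce simp: bp_size_def c_NSOBDD_def bp_wf_def)
  ultimately show ?thesis
    using powr_le_of_power_bound[of "k * ((r + 1) div 2)" "real (bp_size B)" ?n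
        "real ?m / (6 * real k ^ 2)" r k]
      size assms(1) by (simp add: bp_size_def flip: of_nat_power) linarith
qed

end
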